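(* Let $\alpha\in[0,1)$ and let $\widehat U_n^m\in\mathcal{G}_n^m$ be a digraph whose strong component $G^*$ is the directed cycle $C_m$ ($m\ge2$). Then $$2\alpha^2+\alpha^2(n-2)+2(1-\alpha)^2\le E_\alpha(\widehat U_n^2)\le\alpha^2(n-1)^2+\alpha^2+2(1-\alpha)^2,$$ and for $m\ge3$, $$\alpha^2m+\alpha^2(n-m)\le E_\alpha(\widehat U_n^m)\le\alpha^2(n-m+1)^2+\alpha^2(m-1).$$ For $\alpha\in(0,1)$, the lower bound is attained if and only if each hanging tree $T^{(i)}$ is an in-tree rooted at its vertex $v_i$ of $C_m$, and the upper bound is attained if and only if all $n-m$ vertices outside $C_m$ are leaves of a single out-star centred at some vertex of $C_m$.
   Context: Digraphs are finite without loops or multiple arcs. $C_m$ is the directed cycle $v_1\to v_2\to\cdots\to v_m\to v_1$ ($C_2$ is a pair of opposite arcs). $A_\alpha(G)=\alpha D^+(G)+(1-\alpha)A(G)$, with $A(G)$ the adjacency matrix and $D^+(G)$ the diagonal outdegree matrix. $E_\alpha(G)=\sum_i\lambda_{\alpha i}^2$ is the sum of squares of all eigenvalues of $A_\alpha(G)$ with multiplicity. A directed tree is a digraph whose underlying graph is a tree (a single vertex allowed); an in-tree is a directed tree with all outdegrees at most $1$, its root being the vertex of outdegree $0$. The class $\mathcal{G}_n^m$ ($2\le m\le n$): $G\in\mathcal{G}_n^m$ consists of a strongly connected digraph $G^*$ on $m$ vertices $v_1,\dots,v_m$ together with directed trees $T^{(1)},\dots,T^{(m)}$, where $T^{(i)}$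 has $n_i\ge1$ vertices including $v_i$, the sets $\mathcal{V}(T^{(i)})$ are pairwise disjoint, $\mathcal{V}(T^{(i)})\cap\mathcal{V}(G^* )=\{v_i\}$, $n=\sum_i n_i$, and the arcs of $G$ are those of $G^*$ and of the $T^{(i)}$. *)

theory Defs
  imports "Jordan_Normal_Form.Char_Poly" "HOL-Library.Multiset"
begin

text \<open>Digraphs on the vertex set {0..<n}; arcs given as a set of ordered pairs.\<close>

definition outdeg :: "(nat \<times> nat) set \<Rightarrow> nat \<Rightarrow> nat" where
  "outdeg Arcs v = card {w. (v, w) \<in> Arcs}"

definition A_alpha :: "real \<Rightarrow> nat \<Rightarrow> (nat \<times> nat) set \<Rightarrow> real mat" where
  "A_alpha \<alpha> n Arcs = mat n n (\<lambda>(i, j).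
      \<alpha> * (if i = j then real (outdeg Arcs i) else 0)
      + (1 - \<alpha>) * (if (i, j) \<in> Arcs then 1 else 0))"

definition eig_mset :: "real mat \<Rightarrow> complex multiset" where
  "eig_mset A = (THE M. char_poly (map_mat complex_of_real A)
                        = (\<Prod>a\<in>#M. [:- a, 1:]))"

definition E_alpha :: "real \<Rightarrow> nat \<Rightarrow> (nat \<times> nat) set \<Rightarrow> real" where
  "E_alpha \<alpha> n Arcs = Re (\<Sum>z\<in>#eig_mset (A_alpha \<alpha> n Arcs). z\<^sup>2)"

text \<open>Directed tree: the underlying graph is a tree (no loops, no opposite arcs,
  connected, #arcs = #vertices - 1).\<close>
definition directed_tree :: "nat set \<Rightarrow> (nat \<times> nat) set \<Rightarrow> bool" where
  "directed_tree T TA \<longleftrightarrow> finite T \<and> T \<noteq> {} \<and> TA \<subseteq> T \<times> T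
     \<and> (\<forall>v. (v, v) \<notin> TA) \<and> (\<forall>u v. (u, v) \<in> TA \<longrightarrow> (v, u) \<notin> TA)
     \<and> (\<forall>u\<in>T. \<forall>v\<in>T. (u, v) \<in> (TA \<union> TA\<inverse>)\<^sup>*)
     \<and> card TA = card T - 1"

definition cycle_arcs :: "nat \<Rightarrow> (nat \<Rightarrow> nat) \<Rightarrow> (nat \<times> nat) set" where
  "cycle_arcs m c = {(c i, c ((i + 1) mod m)) | i. i < m}"

text \<open>G (vertex set {0..<n}, arcs Arcs) belongs to G_n^m with strong component G^* = C_m,
  cycle vertices c 0,...,c (m-1), and hanging directed trees (T i, TA i), i < m.\<close>
definition unicyclic_class ::
  "nat \<Rightarrow> nat \<Rightarrow> (nat \<times> nat) set \<Rightarrow> (nat \<Rightarrow> nat) \<Rightarrow> (nat \<Rightarrow> nat set)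
     \<Rightarrow> (nat \<Rightarrow> (nat \<times> nat) set) \<Rightarrow> bool" where
  "unicyclic_class n m Arcs c T TA \<longleftrightarrow>
     2 \<le> m \<and> m \<le> n \<and> inj_on c {..<m}
     \<and> (\<forall>i<m. directed_tree (T i) (TA i))
     \<and> (\<forall>i<m. T i \<inter> c ` {..<m} = {c i})
     \<and> (\<forall>i<m. \<forall>j<m. i \<noteq> j \<longrightarrow> T i \<inter> T j = {})
     \<and> (\<Union>i<m. T i) = {..<n}
     \<and> Arcs = cycle_arcs m c \<union> (\<Union>i<m. TA i)"

definition in_tree_rooted :: "nat set \<Rightarrow> (nat \<times> nat) set \<Rightarrow> nat \<Rightarrow> bool" where
  "in_tree_rooted T TA r \<longleftrightarrow> directed_tree T TA \<and> r \<in> T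
     \<and> (\<forall>v\<in>T. outdeg TA v \<le> 1) \<and> outdeg TA r = 0"

definition single_out_star ::
  "nat \<Rightarrow> nat \<Rightarrow> (nat \<Rightarrow> nat) \<Rightarrow> (nat \<Rightarrow> nat set) \<Rightarrow> (nat \<Rightarrow> (nat \<times> nat) set) \<Rightarrow> bool" where
  "single_out_star n m c T TA \<longleftrightarrow> (\<exists>j<m.
      T j = {c j} \<union> ({..<n} - c ` {..<m})
      \<and> TA j = {(c j, w) | w. w \<in> {..<n} - c ` {..<m}}
      \<and> (\<forall>i<m. i \<noteq> j \<longrightarrow> T i = {c i} \<and> TA i = {}))"

end

(* The sum of the squares of the eigenvalues of a square matrix M is the trace of M^2,
   i.e. sum_{i,j} M_ij M_ji (triangularise M by a Schur decomposition). For A_alpha of a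
   loopless digraph the diagonal terms give alpha^2 sum_v d(v)^2, with d the outdegree, and
   the off-diagonal terms give (1 - alpha)^2 times the number of arcs whose reverse is also
   an arc; in a digraph of G_n^m with strong component C_m such arcs exist only for m = 2,
   namely the two arcs of C_2.

   It remains to bound sum d^2 for outdegrees that sum to n and are at least 1 on the
   cycle. First, sum d^2 >= sum d = n, with equality iff every d <= 1, i.e. every hanging
   tree is an in-tree rooted at its cycle vertex. Second, writing d = e + [v on the cycle]
   with sum e = n - m, we get sum d^2 = sum e^2 + 2 sum_cycle e + m <= (n-m)^2 + 2(n-m) + m,
   with equality iff all of e sits at a single cycle vertex, i.e. all tree arcs leave that
   vertex: the trees form one out-star. *)

theory Submission
  imports Defs "Jordan_Normal_Form.Schur_Decomposition"
begin

definition trace :: "'a::comm_ring_1 mat \<Rightarrow> 'a" where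
  "trace A = (\<Sum>i<dim_row A. A $$ (i, i))"

lemma trace_mult_eq_sum:
  fixes A B :: "'a::comm_ring_1 mat"
  assumes "A \<in> carrier_mat n k" "B \<in> carrier_mat k n"
  shows "trace (A * B) = (\<Sum>i<n. \<Sum>j<k. A $$ (i, j) * B $$ (j, i))"
  using assms
  by (auto simp: trace_def scalar_prod_def intro!: sum.cong sum.reindex_bij_witness[of _ id id])

lemma trace_mult_comm:
  fixes A B :: "'a::comm_ring_1 mat"
  assumes "A \<in> carrier_mat n k" "B \<in> carrier_mat k n"
  shows "trace (A * B) = trace (B * A)"
  using assms by (simp add: trace_mult_eq_sum sum.swap[of _ "{..<k}"] mult.commute)

lemma trace_similar_mat_wit:
  fixes A B :: "'a::comm_ring_1 mat"
  assumes "similar_mat_wit A B P Q"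
  shows "trace A = trace B"
proof -
  from similar_mat_witD[OF refl assms] obtain n where
    carr: "A \<in> carrier_mat n n" "B \<in> carrier_mat n n" "P \<in> carrier_mat n n" "Q \<in> carrier_mat n n"
    and QP: "Q * P = 1\<^sub>m n" and A: "A = P * B * Q"
    by blast
  have "trace A = trace (P * (B * Q))"
    using A carr by (simp add: assoc_mult_mat[of P n n B n Q n])
  also have "\<dots> = trace (B * Q * P)"
    using carr by (intro trace_mult_comm) auto
  also have "B * Q * P = B"
    using carr QP by (simp add: assoc_mult_mat[of B n n Q n P n])
  finally show ?thesis .
qed

lemma trace_square_upper_triangular:
  fixes B :: "'a::comm_ring_1 mat"
  assumes ut: "upper_triangular B" and B: "B \<in> carrier_mat n n"
  shows "trace (B * B) = (\<Sum>i<n. B $$ (i, i) ^ 2)"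
proof -
  have "B $$ (i, j) * B $$ (j, i) = (if j = i then B $$ (i, i) ^ 2 else 0)"
    if "i < n" "j < n" for i j
    using that ut B
    by (cases i j rule: linorder_cases) (auto simp: power2_eq_square upper_triangular_def)
  then show ?thesis
    using B by (simp add: trace_mult_eq_sum)
qed

lemma proots_prod_mset_linear_factors: "proots (\<Prod>a\<in>#M. [:- a, 1:]) = M"
proof (induction M)
  case (add x M)
  have "proots (\<Prod>a\<in>#add_mset x M. [:- a, 1:]) = proots ([:- x, 1:] * (\<Prod>a\<in>#M. [:- a, 1:]))"
    by simp
  also have "\<dots> = proots [:- x, 1:] + proots (\<Prod>a\<in>#M. [:- a, 1:])"
    by (rule proots_mult) (auto simp: prod_mset_zero_iff)
  also have "proots [:- x, 1:] = {#x#}"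
    using proots_linear_factor[of "- x"] by simp
  finally show ?case
    using add.IH by simp
qed simp

lemma eig_mset_eqI:
  assumes "char_poly (map_mat complex_of_real A) = (\<Prod>a\<in>#M. [:- a, 1:])"
  shows "eig_mset A = M"
  unfolding eig_mset_def
  by (rule the_equality) (use assms proots_prod_mset_linear_factors in metis)+

lemma sum_eig_mset_power2:
  assumes A: "A \<in> carrier_mat n n"
  shows "(\<Sum>z\<in>#eig_mset A. z ^ 2) = complex_of_real (\<Sum>i<n. \<Sum>j<n. A $$ (i, j) * A $$ (j, i))"
proof -
  define Ac where "Ac = map_mat complex_of_real A"
  have Ac: "Ac \<in> carrier_mat n n"
    using A by (simp add: Ac_def)
  obtain es where char_poly: "char_poly Ac = (\<Prod>e\<leftarrow>es. [:- e, 1:])"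
    using char_poly_factorized[OF Ac] by blast
  obtain B P Q where schur: "schur_decomposition Ac es = (B, P, Q)"
    by (cases "schur_decomposition Ac es") auto
  from schur_decomposition[OF Ac char_poly schur] have sim: "similar_mat_wit Ac B P Q"
    and ut: "upper_triangular B" and diag: "diag_mat B = es"
    by auto
  have B: "B \<in> carrier_mat n n"
    using similar_mat_witD2[OF Ac sim] by auto
  have "eig_mset A = mset es"
    using char_poly by (intro eig_mset_eqI) (simp add: Ac_def flip: prod_mset_prod_list mset_map)
  then have "(\<Sum>z\<in>#eig_mset A. z ^ 2) = sum_list (map (\<lambda>z. z ^ 2) es)"
    by (metis mset_map sum_mset_sum_list)
  also have "\<dots> = (\<Sum>i<n. B $$ (i, i) ^ 2)"
    using B by (simp add: diag[symmetric] diag_mat_def interv_sum_list_conv_sum_set_nat atLeast0LessThan)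
  also have "\<dots> = trace (B * B)"
    using ut B by (simp add: trace_square_upper_triangular)
  also have "\<dots> = trace (Ac * Ac)"
    using trace_similar_mat_wit[OF similar_mat_wit_pow[OF sim, of 2]] Ac B
    by (simp add: numeral_2_eq_2)
  also have "\<dots> = complex_of_real (\<Sum>i<n. \<Sum>j<n. A $$ (i, j) * A $$ (j, i))"
    using A Ac by (simp add: trace_mult_eq_sum Ac_def)
  finally show ?thesis .
qed

lemma E_alpha_loopless:
  assumes arcs: "Arcs \<subseteq> {..<n} \<times> {..<n}" and loopless: "\<forall>v. (v, v) \<notin> Arcs"
  shows "E_alpha \<alpha> n Arcs = \<alpha>\<^sup>2 * (\<Sum>v<n. real (outdeg Arcs v) ^ 2)
           + (1 - \<alpha>)\<^sup>2 * real (card {(u, v). (u, v) \<in> Arcs \<and> (v, u) \<in> Arcs})"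
proof -
  define M where "M = A_alpha \<alpha> n Arcs"
  define D where "D = {(u, v). (u, v) \<in> Arcs \<and> (v, u) \<in> Arcs}"
  have M: "M \<in> carrier_mat n n"
    by (simp add: M_def A_alpha_def)
  have entry_prod: "M $$ (i, j) * M $$ (j, i)
      = (if j = i then \<alpha>\<^sup>2 * real (outdeg Arcs i) ^ 2 else 0) + (1 - \<alpha>)\<^sup>2 * of_bool ((i, j) \<in> D)"
    if "i < n" "j < n" for i j
    using that loopless by (auto simp: M_def A_alpha_def D_def power2_eq_square)
  have "D \<subseteq> {..<n} \<times> {..<n}"
    using arcs by (auto simp: D_def)
  then have count: "(\<Sum>i<n. \<Sum>j<n. of_bool ((i, j) \<in> D) :: real) = real (card D)"
    by (simp only: sum.cartesian_product case_prod_eta) (simp add: Int_absorb1)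
  have "E_alpha \<alpha> n Arcs = (\<Sum>i<n. \<Sum>j<n. M $$ (i, j) * M $$ (j, i))"
    unfolding E_alpha_def M_def[symmetric] sum_eig_mset_power2[OF M] by simp
  also have "\<dots> = (\<Sum>i<n. \<Sum>j<n. (if j = i then \<alpha>\<^sup>2 * real (outdeg Arcs i) ^ 2 else 0)
      + (1 - \<alpha>)\<^sup>2 * of_bool ((i, j) \<in> D))"
    by (intro sum.cong refl) (simp add: entry_prod)
  also have "\<dots> = \<alpha>\<^sup>2 * (\<Sum>v<n. real (outdeg Arcs v) ^ 2)
      + (1 - \<alpha>)\<^sup>2 * (\<Sum>i<n. \<Sum>j<n. of_bool ((i, j) \<in> D))"
    by (simp add: sum.distrib sum_distrib_left del: sum_of_bool_eq)
  also have "\<dots> = \<alpha>\<^sup>2 * (\<Sum>v<n. real (outdeg Arcs v) ^ 2) + (1 - \<alpha>)\<^sup>2 * real (card D)"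
    by (simp only: count)
  finally show ?thesis
    by (simp only: D_def)
qed

lemma power2_eq_self_iff_le_1: "(k::nat) ^ 2 = k \<longleftrightarrow> k \<le> 1"
  by (cases k) (auto simp: power2_eq_square)

lemma sum_le_sum_power2: "(\<Sum>x\<in>A. f x) \<le> (\<Sum>x\<in>A. (f x :: nat) ^ 2)"
  by (intro sum_mono) (simp add: power2_eq_square le_square)

lemma sum_power2_eq_sum_iff:
  fixes f :: "'a \<Rightarrow> nat"
  assumes "finite A"
  shows "(\<Sum>x\<in>A. f x ^ 2) = (\<Sum>x\<in>A. f x) \<longleftrightarrow> (\<forall>x\<in>A. f x \<le> 1)"
proof
  assume eq: "(\<Sum>x\<in>A. f x ^ 2) = (\<Sum>x\<in>A. f x)"
  have "f x = f x ^ 2" if "x \<in> A" for x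
    by (rule sum_mono_inv[OF eq[symmetric] _ that assms]) (simp add: power2_eq_square le_square)
  then show "\<forall>x\<in>A. f x \<le> 1"
    by (metis power2_eq_self_iff_le_1)
next
  assume "\<forall>x\<in>A. f x \<le> 1"
  then show "(\<Sum>x\<in>A. f x ^ 2) = (\<Sum>x\<in>A. f x)"
    by (intro sum.cong) (auto simp: power2_eq_self_iff_le_1)
qed

lemma power2_sum_eq_sum_power2_plus_cross_terms:
  fixes f :: "'a \<Rightarrow> 'b::comm_semiring_1"
  assumes "finite A"
  shows "(\<Sum>x\<in>A. f x) ^ 2 = (\<Sum>x\<in>A. f x ^ 2) + (\<Sum>x\<in>A. \<Sum>y\<in>A - {x}. f x * f y)"
proof -
  have "(\<Sum>x\<in>A. f x) ^ 2 = (\<Sum>x\<in>A. \<Sum>y\<in>A. f x * f y)"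
    by (simp add: power2_eq_square sum_product)
  also have "\<dots> = (\<Sum>x\<in>A. f x ^ 2 + (\<Sum>y\<in>A - {x}. f x * f y))"
    using assms by (intro sum.cong refl) (simp add: sum.remove power2_eq_square)
  finally show ?thesis
    by (simp add: sum.distrib)
qed

lemma sum_power2_le_power2_sum: "(\<Sum>x\<in>A. f x ^ 2) \<le> (\<Sum>x\<in>A. f x :: nat) ^ 2"
  by (cases "finite A") (simp_all add: power2_sum_eq_sum_power2_plus_cross_terms)

lemma sum_power2_eq_power2_sum_iff:
  fixes f :: "'a \<Rightarrow> nat"
  assumes "finite A"
  shows "(\<Sum>x\<in>A. f x ^ 2) = (\<Sum>x\<in>A. f x) ^ 2 \<longleftrightarrow> (\<forall>x\<in>A. \<forall>y\<in>A - {x}. f x = 0 \<or> f y = 0)"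
  using assms by (simp add: power2_sum_eq_sum_power2_plus_cross_terms)

lemma sum_power2_eq_and_sum_eq_iff_concentrated:
  fixes e :: "'a \<Rightarrow> nat"
  assumes fin: "finite N" and CN: "C \<subseteq> N" and "C \<noteq> {}" and sum_e: "(\<Sum>v\<in>N. e v) = k"
  shows "(\<Sum>v\<in>N. e v ^ 2) = k ^ 2 \<and> (\<Sum>v\<in>C. e v) = k \<longleftrightarrow> (\<exists>x\<in>C. \<forall>v\<in>N - {x}. e v = 0)"
proof
  assume "(\<Sum>v\<in>N. e v ^ 2) = k ^ 2 \<and> (\<Sum>v\<in>C. e v) = k"
  moreover have "(\<Sum>v\<in>N. e v) = (\<Sum>v\<in>N - C. e v) + (\<Sum>v\<in>C. e v)"
    using sum.subset_diff[OF CN fin] .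
  ultimately have cross: "\<forall>x\<in>N. \<forall>y\<in>N - {x}. e x = 0 \<or> e y = 0" and off: "\<forall>v\<in>N - C. e v = 0"
    using sum_power2_eq_power2_sum_iff[OF fin, of e] sum_e fin by auto
  obtain x where "x \<in> C" and "\<forall>v\<in>C - {x}. e v = 0"
  proof (cases "\<forall>v\<in>C. e v = 0")
    case True
    then show ?thesis
      using \<open>C \<noteq> {}\<close> that by blast
  next
    case False
    then obtain x where "x \<in> C" "e x \<noteq> 0"
      by blast
    then show ?thesis
      using cross CN that by blast
  qed
  with off show "\<exists>x\<in>C. \<forall>v\<in>N - {x}. e v = 0"
    by blast
next
  assume "\<exists>x\<in>C. \<forall>v\<in>N - {x}. e v = 0"
  then obtain x where x: "x \<in> C" and zero: "\<forall>v\<in>N - {x}. e v = 0"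
    by blast
  have xN: "x \<in> N" and finC: "finite C"
    using x CN fin finite_subset by auto
  have "(\<Sum>v\<in>N. e v) = e x" "(\<Sum>v\<in>N. e v ^ 2) = e x ^ 2"
    using zero by (simp_all add: sum.remove[OF fin xN])
  moreover have "(\<Sum>v\<in>C. e v) = e x"
    using zero CN by (simp add: sum.remove[OF finC x] subset_iff)
  ultimately show "(\<Sum>v\<in>N. e v ^ 2) = k ^ 2 \<and> (\<Sum>v\<in>C. e v) = k"
    using sum_e by simp
qed

lemma sum_power2_le_concentrated:
  fixes d :: "'a \<Rightarrow> nat"
  assumes fin: "finite N" and CN: "C \<subseteq> N" and pos: "\<forall>v\<in>C. 1 \<le> d v"
    and sum_d: "(\<Sum>v\<in>N. d v) = k + card C"
  shows "(\<Sum>v\<in>N. d v ^ 2) \<le> (k + 1) ^ 2 + card C - 1"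
    and "C \<noteq> {} \<Longrightarrow> (\<Sum>v\<in>N. d v ^ 2) = (k + 1) ^ 2 + card C - 1
           \<longleftrightarrow> (\<exists>x\<in>C. \<forall>v\<in>N - {x}. d v = (if v \<in> C then 1 else 0))"
proof -
  define e where "e v = d v - (if v \<in> C then 1 else 0)" for v
  have d_eq: "d v = e v + (if v \<in> C then 1 else 0)" for v
    using pos by (auto simp: e_def)
  have card_C: "(\<Sum>v\<in>N. if v \<in> C then 1 else 0 :: nat) = card C"
    using fin CN by (simp add: sum.If_cases Int_absorb1)
  have sum_e: "(\<Sum>v\<in>N. e v) = k"
    using sum_d card_C by (simp add: d_eq sum.distrib)
  have sum_sq: "(\<Sum>v\<in>N. d v ^ 2) = (\<Sum>v\<in>N. e v ^ 2) + 2 * (\<Sum>v\<in>C. e v) + card C"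
  proof -
    have restrict: "(\<Sum>v\<in>N. if v \<in> C then e v else 0) = (\<Sum>v\<in>C. e v)"
      using sum.inter_restrict[OF fin, of e C] Int_absorb1[OF CN] by simp
    have "(\<Sum>v\<in>N. d v ^ 2)
        = (\<Sum>v\<in>N. e v ^ 2 + 2 * (if v \<in> C then e v else 0) + (if v \<in> C then 1 else 0))"
      by (intro sum.cong) (auto simp: d_eq power2_eq_square algebra_simps)
    also have "\<dots> = (\<Sum>v\<in>N. e v ^ 2) + 2 * (\<Sum>v\<in>N. if v \<in> C then e v else 0)
        + (\<Sum>v\<in>N. if v \<in> C then 1 else 0)"
      by (simp add: sum.distrib sum_distrib_left)
    also have "\<dots> = (\<Sum>v\<in>N. e v ^ 2) + 2 * (\<Sum>v\<in>C. e v) + card C"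
      by (simp only: restrict card_C)
    finally show ?thesis .
  qed
  have sum_C_le: "(\<Sum>v\<in>C. e v) \<le> k"
    using sum_mono2[OF fin CN, of e] sum_e by simp
  have sq_le: "(\<Sum>v\<in>N. e v ^ 2) \<le> k ^ 2"
    using sum_power2_le_power2_sum[of e N] sum_e by simp
  have bound: "(k + 1) ^ 2 + card C - 1 = k ^ 2 + 2 * k + card C"
    by (simp add: power2_eq_square)
  show "(\<Sum>v\<in>N. d v ^ 2) \<le> (k + 1) ^ 2 + card C - 1"
    using sum_sq sum_C_le sq_le bound by linarith
  assume "C \<noteq> {}"
  have "(\<Sum>v\<in>N. d v ^ 2) = (k + 1) ^ 2 + card C - 1
      \<longleftrightarrow> (\<Sum>v\<in>N. e v ^ 2) = k ^ 2 \<and> (\<Sum>v\<in>C. e v) = k"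
    using sum_sq sum_C_le sq_le bound by auto
  also have "\<dots> \<longleftrightarrow> (\<exists>x\<in>C. \<forall>v\<in>N - {x}. e v = 0)"
    by (rule sum_power2_eq_and_sum_eq_iff_concentrated[OF fin CN \<open>C \<noteq> {}\<close> sum_e])
  also have "\<dots> \<longleftrightarrow> (\<exists>x\<in>C. \<forall>v\<in>N - {x}. d v = (if v \<in> C then 1 else 0))"
    by (simp add: d_eq)
  finally show "(\<Sum>v\<in>N. d v ^ 2) = (k + 1) ^ 2 + card C - 1
      \<longleftrightarrow> (\<exists>x\<in>C. \<forall>v\<in>N - {x}. d v = (if v \<in> C then 1 else 0))" .
qed

lemma finite_out_neighbours: "finite A \<Longrightarrow> finite {w. (v, w) \<in> A}"
  by (rule finite_subset[of _ "snd ` A"]) force+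

lemma outdeg_eq_0_iff: "finite A \<Longrightarrow> outdeg A v = 0 \<longleftrightarrow> v \<notin> fst ` A"
  using finite_out_neighbours[of A v] by (force simp: outdeg_def)

lemma sum_outdeg:
  assumes "finite V" "finite A" "fst ` A \<subseteq> V"
  shows "(\<Sum>v\<in>V. outdeg A v) = card A"
proof -
  have "Sigma V (\<lambda>v. {w. (v, w) \<in> A}) = A"
    using assms(3) by force
  moreover have "card (Sigma V (\<lambda>v. {w. (v, w) \<in> A})) = (\<Sum>v\<in>V. card {w. (v, w) \<in> A})"
    using assms(1,2) finite_out_neighbours by (intro card_SigmaI) auto
  ultimately show ?thesis
    by (simp add: outdeg_def)
qed

lemma directed_tree_out_star:
  assumes tree: "directed_tree T TA" and r: "r \<in> T" and from_r: "fst ` TA \<subseteq> {r}"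
  shows "TA = {r} \<times> (T - {r})"
proof -
  from tree have fin: "finite T" and arcs: "TA \<subseteq> T \<times> T" and loopless: "\<forall>v. (v, v) \<notin> TA"
    and card: "card TA = card T - 1"
    unfolding directed_tree_def by auto
  show ?thesis
  proof (rule card_subset_eq)
    show "finite ({r} \<times> (T - {r}))"
      using fin by simp
    show "TA \<subseteq> {r} \<times> (T - {r})"
    proof
      fix p
      assume p: "p \<in> TA"
      then have "fst p = r"
        using from_r by blast
      with p arcs loopless show "p \<in> {r} \<times> (T - {r})"
        by (cases p) auto
    qed
    show "card TA = card ({r} \<times> (T - {r}))"
      using card r by (simp add: card_cartesian_product_singleton card_Diff_singleton)
  qed
qed

locale unicyclic =
  fixes n m :: nat and Arcs :: "(nat \<times> nat) set" and c :: "nat \<Rightarrow> nat"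
    and T :: "nat \<Rightarrow> nat set" and TA :: "nat \<Rightarrow> (nat \<times> nat) set"
  assumes unicyclic_class: "unicyclic_class n m Arcs c T TA"
begin

lemma two_le_m: "2 \<le> m" and m_le_n: "m \<le> n" and inj_c: "inj_on c {..<m}"
  and tree: "i < m \<Longrightarrow> directed_tree (T i) (TA i)"
  and tree_inter_cycle: "i < m \<Longrightarrow> T i \<inter> c ` {..<m} = {c i}"
  and trees_disjoint: "i < m \<Longrightarrow> j < m \<Longrightarrow> i \<noteq> j \<Longrightarrow> T i \<inter> T j = {}"
  and trees_cover: "(\<Union>i<m. T i) = {..<n}"
  and Arcs_eq: "Arcs = cycle_arcs m c \<union> (\<Union>i<m. TA i)"
  using unicyclic_class unfolding unicyclic_class_def by auto

lemma finite_tree: "i < m \<Longrightarrow> finite (T i)"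
  and tree_arcs_subset: "i < m \<Longrightarrow> TA i \<subseteq> T i \<times> T i"
  and tree_no_loop: "i < m \<Longrightarrow> (v, v) \<notin> TA i"
  and tree_asym: "i < m \<Longrightarrow> (u, v) \<in> TA i \<Longrightarrow> (v, u) \<notin> TA i"
  and card_tree_arcs: "i < m \<Longrightarrow> card (TA i) = card (T i) - 1"
  and tree_nonempty: "i < m \<Longrightarrow> T i \<noteq> {}"
  using tree unfolding directed_tree_def by auto

lemma finite_tree_arcs: "i < m \<Longrightarrow> finite (TA i)"
  using finite_tree tree_arcs_subset by (meson finite_SigmaI finite_subset)

lemma cycle_vertex_in_tree: "i < m \<Longrightarrow> c i \<in> T i"
  using tree_inter_cycle by blast

lemma in_tree_less: "i < m \<Longrightarrow> v \<in> T i \<Longrightarrow> v < n"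
  using trees_cover by blast

lemma in_some_tree: "v < n \<Longrightarrow> \<exists>i<m. v \<in> T i"
  using trees_cover by blast

lemma tree_unique: "i < m \<Longrightarrow> j < m \<Longrightarrow> v \<in> T i \<Longrightarrow> v \<in> T j \<Longrightarrow> i = j"
  using trees_disjoint by blast

lemma in_cycle_iff: "i < m \<Longrightarrow> v \<in> T i \<Longrightarrow> v \<in> c ` {..<m} \<longleftrightarrow> v = c i"
  using tree_inter_cycle by blast

lemma c_eq_iff: "i < m \<Longrightarrow> j < m \<Longrightarrow> c i = c j \<longleftrightarrow> i = j"
  using inj_c by (auto dest: inj_onD)

lemma card_cycle: "card (c ` {..<m}) = m"
  using inj_c by (simp add: card_image)

lemma succ_less: "(i + 1) mod m < m"
  using two_le_m by simp

lemma succ_neq: "i < m \<Longrightarrow> (i + 1) mod m \<noteq> i"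
  using two_le_m by (cases "i + 1 = m") auto

lemma succ_succ_eq_self_imp_m_eq_2: "i < m \<Longrightarrow> ((i + 1) mod m + 1) mod m = i \<Longrightarrow> m = 2"
  using two_le_m by (cases "i + 1 = m"; cases "i + 2 = m") auto

lemma succ_notin_tree: "i < m \<Longrightarrow> c ((i + 1) mod m) \<notin> T i"
  using in_cycle_iff c_eq_iff succ_less succ_neq by blast

lemma arc_iff:
  assumes i: "i < m" and v: "v \<in> T i"
  shows "(v, w) \<in> Arcs \<longleftrightarrow> (v, w) \<in> TA i \<or> (v = c i \<and> w = c ((i + 1) mod m))"
proof
  assume "(v, w) \<in> Arcs"
  then consider (cycle) k where "k < m" "v = c k" "w = c ((k + 1) mod m)"
    | (tree) j where "j < m" "(v, w) \<in> TA j"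
    unfolding Arcs_eq cycle_arcs_def by blast
  then show "(v, w) \<in> TA i \<or> (v = c i \<and> w = c ((i + 1) mod m))"
  proof cases
    case cycle
    then have "k = i"
      using in_cycle_iff[OF i v] c_eq_iff i by auto
    with cycle show ?thesis
      by simp
  next
    case tree
    then have "j = i"
      using tree_arcs_subset tree_unique i v by blast
    with tree show ?thesis
      by simp
  qed
next
  assume "(v, w) \<in> TA i \<or> (v = c i \<and> w = c ((i + 1) mod m))"
  then show "(v, w) \<in> Arcs"
    unfolding Arcs_eq cycle_arcs_def using i by blast
qed

lemma outdeg_Arcs:
  assumes i: "i < m" and v: "v \<in> T i"
  shows "outdeg Arcs v = outdeg (TA i) v + (if v = c i then 1 else 0)"
proof -
  have "{w. (v, w) \<in> Arcs} = {w. (v, w) \<in> TA i} \<union> (if v = c i then {c ((i + 1) mod m)} else {})"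
    using arc_iff[OF i v] by auto
  moreover have "c ((i + 1) mod m) \<notin> {w. (v, w) \<in> TA i}"
    using succ_notin_tree[OF i] tree_arcs_subset[OF i] by auto
  ultimately show ?thesis
    using finite_out_neighbours[OF finite_tree_arcs[OF i]] unfolding outdeg_def by auto
qed

lemma sum_outdeg_Arcs: "(\<Sum>v<n. outdeg Arcs v) = n"
proof -
  have "(\<Sum>v<n. outdeg Arcs v) = (\<Sum>i<m. \<Sum>v\<in>T i. outdeg Arcs v)"
    unfolding trees_cover[symmetric]
    by (rule sum.UNION_disjoint) (auto simp: finite_tree dest: trees_disjoint)
  also have "\<dots> = (\<Sum>i<m. card (T i))"
  proof (rule sum.cong[OF refl])
    fix i
    assume "i \<in> {..<m}"
    then have i: "i < m"
      by simp
    have "(\<Sum>v\<in>T i. outdeg Arcs v) = (\<Sum>v\<in>T i. outdeg (TA i) v) + 1"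
      using finite_tree[OF i] cycle_vertex_in_tree[OF i] by (simp add: outdeg_Arcs[OF i] sum.distrib)
    also have "\<dots> = card (TA i) + 1"
      using tree_arcs_subset[OF i] by (subst sum_outdeg[OF finite_tree[OF i] finite_tree_arcs[OF i]]) force+
    also have "\<dots> = card (T i)"
      using card_tree_arcs[OF i] finite_tree[OF i] tree_nonempty[OF i] by (simp add: Suc_leI card_gt_0_iff)
    finally show "(\<Sum>v\<in>T i. outdeg Arcs v) = card (T i)" .
  qed
  also have "\<dots> = card (\<Union>i<m. T i)"
    by (rule card_UN_disjoint[symmetric]) (auto simp: finite_tree dest: trees_disjoint)
  finally show ?thesis
    by (simp add: trees_cover)
qed

lemma Arcs_subset: "Arcs \<subseteq> {..<n} \<times> {..<n}"
proof -
  have "c k < n" if "k < m" for k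
    using that cycle_vertex_in_tree in_tree_less by blast
  then show ?thesis
    unfolding Arcs_eq cycle_arcs_def using succ_less tree_arcs_subset in_tree_less by fastforce
qed

lemma no_loop: "(v, v) \<notin> Arcs"
proof
  assume loop: "(v, v) \<in> Arcs"
  then obtain i where i: "i < m" "v \<in> T i"
    using Arcs_subset in_some_tree by blast
  with loop have "(v, v) \<in> TA i \<or> (v = c i \<and> v = c ((i + 1) mod m))"
    using arc_iff by blast
  then show False
    using tree_no_loop[OF i(1)] succ_notin_tree[OF i(1)] i(2) by auto
qed

lemma mutual_arc_imp_digon:
  assumes uv: "(u, v) \<in> Arcs" and vu: "(v, u) \<in> Arcs"
  shows "m = 2 \<and> ((u, v) = (c 0, c 1) \<or> (u, v) = (c 1, c 0))"
proof -
  obtain i where i: "i < m" "u \<in> T i"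
    using uv Arcs_subset in_some_tree by blast
  have "(u, v) \<notin> TA i"
  proof
    assume tree_arc: "(u, v) \<in> TA i"
    then have "v \<in> T i"
      using tree_arcs_subset[OF i(1)] by blast
    then have "(v, u) \<in> TA i \<or> (v = c i \<and> u = c ((i + 1) mod m))"
      using vu arc_iff[OF i(1)] by blast
    then show False
      using tree_asym[OF i(1) tree_arc] succ_notin_tree[OF i(1)] i(2) by blast
  qed
  then have u: "u = c i" and v: "v = c ((i + 1) mod m)"
    using uv arc_iff[OF i] by auto
  define i' where "i' = (i + 1) mod m"
  have i': "i' < m" "v \<in> T i'"
    using succ_less cycle_vertex_in_tree v by (auto simp: i'_def)
  have "(v, u) \<notin> TA i'"
  proof
    assume "(v, u) \<in> TA i'"
    then have "u \<in> T i'"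
      using tree_arcs_subset[OF i'(1)] by blast
    then have "i = i'"
      using tree_unique[OF i(1) i'(1) i(2)] by blast
    then show False
      using succ_neq[OF i(1)] by (simp add: i'_def)
  qed
  then have "c i = c ((i' + 1) mod m)"
    using vu arc_iff[OF i'] u by auto
  then have "i = (i' + 1) mod m"
    using c_eq_iff[OF i(1) succ_less[of i']] by simp
  then have "m = 2"
    using succ_succ_eq_self_imp_m_eq_2[OF i(1)] by (simp add: i'_def)
  moreover have "i = 0 \<or> i = 1"
    using i(1) \<open>m = 2\<close> by auto
  ultimately show ?thesis
    using u v by auto
qed

lemma mutual_arcs_eq:
  "{(u, v). (u, v) \<in> Arcs \<and> (v, u) \<in> Arcs} = (if m = 2 then {(c 0, c 1), (c 1, c 0)} else {})"
proof -
  have "(c 0, c 1) \<in> Arcs \<and> (c 1, c 0) \<in> Arcs" if "m = 2"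
  proof -
    have "(c i, c ((i + 1) mod m)) \<in> Arcs" if "i < m" for i
      using that unfolding Arcs_eq cycle_arcs_def by blast
    from this[of 0] this[of 1] show ?thesis
      using \<open>m = 2\<close> by simp
  qed
  then show ?thesis
    using mutual_arc_imp_digon by auto
qed

lemma E_alpha_eq:
  "E_alpha \<alpha> n Arcs = \<alpha>\<^sup>2 * real (\<Sum>v<n. outdeg Arcs v ^ 2) + (1 - \<alpha>)\<^sup>2 * (if m = 2 then 2 else 0)"
proof -
  have "card {(u, v). (u, v) \<in> Arcs \<and> (v, u) \<in> Arcs} = (if m = 2 then 2 else 0)"
  proof (cases "m = 2")
    case True
    then have "c 0 \<noteq> c 1"
      using c_eq_iff[of 0 1] by simp
    with True show ?thesis
      by (simp add: mutual_arcs_eq)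
  qed (simp add: mutual_arcs_eq)
  then show ?thesis
    using E_alpha_loopless[OF Arcs_subset, of \<alpha>] no_loop by simp
qed

lemma outdeg_le_1_iff_in_trees:
  "(\<forall>v<n. outdeg Arcs v \<le> 1) \<longleftrightarrow> (\<forall>i<m. in_tree_rooted (T i) (TA i) (c i))"
proof
  assume le_1: "\<forall>v<n. outdeg Arcs v \<le> 1"
  show "\<forall>i<m. in_tree_rooted (T i) (TA i) (c i)"
  proof (intro allI impI)
    fix i
    assume i: "i < m"
    have "outdeg (TA i) v \<le> 1" if "v \<in> T i" for v
      using le_1 outdeg_Arcs[OF i that] in_tree_less[OF i that] by fastforce
    moreover have "outdeg (TA i) (c i) = 0"
      using le_1 outdeg_Arcs[OF i cycle_vertex_in_tree[OF i]] in_tree_less[OF i cycle_vertex_in_tree[OF i]]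
      by fastforce
    ultimately show "in_tree_rooted (T i) (TA i) (c i)"
      unfolding in_tree_rooted_def using tree[OF i] cycle_vertex_in_tree[OF i] by blast
  qed
next
  assume in_trees: "\<forall>i<m. in_tree_rooted (T i) (TA i) (c i)"
  show "\<forall>v<n. outdeg Arcs v \<le> 1"
  proof (intro allI impI)
    fix v
    assume "v < n"
    then obtain i where i: "i < m" "v \<in> T i"
      using in_some_tree by blast
    have "outdeg (TA i) v \<le> 1" "outdeg (TA i) (c i) = 0"
      using in_trees i unfolding in_tree_rooted_def by blast+
    then show "outdeg Arcs v \<le> 1"
      using outdeg_Arcs[OF i] by auto
  qed
qed

lemma outdeg_Arcs_eq_cycle_indicator_iff:
  assumes "v < n"
  shows "outdeg Arcs v = (if v \<in> c ` {..<m} then 1 else 0) \<longleftrightarrow> (\<forall>i<m. v \<notin> fst ` TA i)"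
proof -
  obtain i where i: "i < m" "v \<in> T i"
    using in_some_tree[OF assms] by blast
  have "v \<notin> fst ` TA j" if j: "j < m" "j \<noteq> i" for j
  proof
    assume "v \<in> fst ` TA j"
    then have "v \<in> T j"
      using tree_arcs_subset[OF j(1)] by force
    then show False
      using tree_unique[OF j(1) i(1) _ i(2)] j(2) by blast
  qed
  then have "(\<forall>j<m. v \<notin> fst ` TA j) \<longleftrightarrow> v \<notin> fst ` TA i"
    using i by blast
  then show ?thesis
    using outdeg_Arcs[OF i] in_cycle_iff[OF i] outdeg_eq_0_iff[OF finite_tree_arcs[OF i(1)]] by simp
qed

lemma outdeg_concentrated_iff_tree_arcs_from:
  "(\<exists>x\<in>c ` {..<m}. \<forall>v\<in>{..<n} - {x}. outdeg Arcs v = (if v \<in> c ` {..<m} then 1 else 0))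
   \<longleftrightarrow> (\<exists>j<m. \<forall>i<m. fst ` TA i \<subseteq> {c j})"
proof -
  have "fst ` TA i \<subseteq> {..<n}" if "i < m" for i
    using that tree_arcs_subset in_tree_less by fastforce
  then have "(\<forall>v\<in>{..<n} - {c j}. \<forall>i<m. v \<notin> fst ` TA i) \<longleftrightarrow> (\<forall>i<m. fst ` TA i \<subseteq> {c j})" for j
    by blast
  then show ?thesis
    using outdeg_Arcs_eq_cycle_indicator_iff by auto
qed

lemma single_out_star_iff_tree_arcs_from:
  "single_out_star n m c T TA \<longleftrightarrow> (\<exists>j<m. \<forall>i<m. fst ` TA i \<subseteq> {c j})"
proof
  assume "single_out_star n m c T TA"
  then obtain j where "j < m" and TAj: "TA j = {(c j, w) |w. w \<in> {..<n} - c ` {..<m}}"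
    and others: "\<forall>i<m. i \<noteq> j \<longrightarrow> T i = {c i} \<and> TA i = {}"
    unfolding single_out_star_def by blast
  have "fst ` TA i \<subseteq> {c j}" if "i < m" for i
    using TAj others that by (cases "i = j") auto
  with \<open>j < m\<close> show "\<exists>j<m. \<forall>i<m. fst ` TA i \<subseteq> {c j}"
    by blast
next
  assume "\<exists>j<m. \<forall>i<m. fst ` TA i \<subseteq> {c j}"
  then obtain j where j: "j < m" and from_cj: "\<forall>i<m. fst ` TA i \<subseteq> {c j}"
    by blast
  have others: "T i = {c i} \<and> TA i = {}" if i: "i < m" and "i \<noteq> j" for i
  proof -
    have "c j \<notin> T i"
      using in_cycle_iff[OF i] c_eq_iff[OF j i] \<open>i \<noteq> j\<close> j by blast
    then have "TA i = {}"
      using from_cj tree_arcs_subset[OF i] i by fastforce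
    moreover have "TA i = {c i} \<times> (T i - {c i})"
      using directed_tree_out_star[OF tree[OF i] cycle_vertex_in_tree[OF i]] calculation by simp
    ultimately have "T i - {c i} = {}"
      by simp
    with \<open>TA i = {}\<close> show ?thesis
      using cycle_vertex_in_tree[OF i] by blast
  qed
  have Tj: "T j - {c j} = {..<n} - c ` {..<m}"
  proof
    show "T j - {c j} \<subseteq> {..<n} - c ` {..<m}"
      using in_tree_less[OF j] in_cycle_iff[OF j] by blast
    show "{..<n} - c ` {..<m} \<subseteq> T j - {c j}"
    proof
      fix v
      assume v: "v \<in> {..<n} - c ` {..<m}"
      then obtain i where i: "i < m" "v \<in> T i"
        using in_some_tree by auto
      have "i = j"
      proof (rule ccontr)
        assume "i \<noteq> j"
        then have "v = c i"
          using others[OF i(1)] i(2) by blast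
        with v i(1) show False
          by blast
      qed
      with i v j show "v \<in> T j - {c j}"
        by blast
    qed
  qed
  have "TA j = {(c j, w) |w. w \<in> {..<n} - c ` {..<m}}"
    using directed_tree_out_star[OF tree[OF j] cycle_vertex_in_tree[OF j]] from_cj j Tj by auto
  moreover have "T j = {c j} \<union> ({..<n} - c ` {..<m})"
    using Tj cycle_vertex_in_tree[OF j] by blast
  ultimately show "single_out_star n m c T TA"
    unfolding single_out_star_def using j others by (intro exI[of _ j]) auto
qed

lemma sum_outdeg_power2_lower:
  "n \<le> (\<Sum>v<n. outdeg Arcs v ^ 2)"
  "(\<Sum>v<n. outdeg Arcs v ^ 2) = n \<longleftrightarrow> (\<forall>i<m. in_tree_rooted (T i) (TA i) (c i))"
  using sum_le_sum_power2[of "outdeg Arcs" "{..<n}"] sum_power2_eq_sum_iff[of "{..<n}" "outdeg Arcs"]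
    sum_outdeg_Arcs outdeg_le_1_iff_in_trees by auto

lemma sum_outdeg_power2_upper:
  "(\<Sum>v<n. outdeg Arcs v ^ 2) \<le> (n - m + 1) ^ 2 + m - 1"
  "(\<Sum>v<n. outdeg Arcs v ^ 2) = (n - m + 1) ^ 2 + m - 1 \<longleftrightarrow> single_out_star n m c T TA"
proof -
  have "1 \<le> outdeg Arcs (c i)" if "i < m" for i
    using outdeg_Arcs[OF that cycle_vertex_in_tree[OF that]] by simp
  moreover have "c ` {..<m} \<subseteq> {..<n}"
    using cycle_vertex_in_tree in_tree_less by blast
  moreover have "c ` {..<m} \<noteq> {}"
    using two_le_m by (simp add: lessThan_empty_iff)
  ultimately have cycle: "c ` {..<m} \<subseteq> {..<n}" "c ` {..<m} \<noteq> {}" "\<forall>v\<in>c ` {..<m}. 1 \<le> outdeg Arcs v"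
    by auto
  have "(\<Sum>v<n. outdeg Arcs v) = (n - m) + card (c ` {..<m})"
    using sum_outdeg_Arcs card_cycle m_le_n by simp
  note concentrated = sum_power2_le_concentrated[OF finite_lessThan cycle(1,3) this, unfolded card_cycle]
  show "(\<Sum>v<n. outdeg Arcs v ^ 2) \<le> (n - m + 1) ^ 2 + m - 1"
    by (rule concentrated(1))
  show "(\<Sum>v<n. outdeg Arcs v ^ 2) = (n - m + 1) ^ 2 + m - 1 \<longleftrightarrow> single_out_star n m c T TA"
    using concentrated(2)[OF cycle(2)] outdeg_concentrated_iff_tree_arcs_from
      single_out_star_iff_tree_arcs_from by simp
qed

lemma E_alpha_lower:
  "\<alpha>\<^sup>2 * real n + (1 - \<alpha>)\<^sup>2 * (if m = 2 then 2 else 0) \<le> E_alpha \<alpha> n Arcs"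
  "0 < \<alpha> \<Longrightarrow> E_alpha \<alpha> n Arcs = \<alpha>\<^sup>2 * real n + (1 - \<alpha>)\<^sup>2 * (if m = 2 then 2 else 0)
     \<longleftrightarrow> (\<forall>i<m. in_tree_rooted (T i) (TA i) (c i))"
proof -
  define Q where "Q = (\<Sum>v<n. outdeg Arcs v ^ 2)"
  note E = E_alpha_eq[of \<alpha>, folded Q_def]
  show "\<alpha>\<^sup>2 * real n + (1 - \<alpha>)\<^sup>2 * (if m = 2 then 2 else 0) \<le> E_alpha \<alpha> n Arcs"
    using mult_left_mono[of "real n" "real Q" "\<alpha>\<^sup>2"] sum_outdeg_power2_lower(1)[folded Q_def]
    by (simp add: E)
  show "0 < \<alpha> \<Longrightarrow> E_alpha \<alpha> n Arcs = \<alpha>\<^sup>2 * real n + (1 - \<alpha>)\<^sup>2 * (if m = 2 then 2 else 0)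
     \<longleftrightarrow> (\<forall>i<m. in_tree_rooted (T i) (TA i) (c i))"
    using sum_outdeg_power2_lower(2)[folded Q_def] by (simp add: E)
qed

lemma E_alpha_upper:
  "E_alpha \<alpha> n Arcs \<le> \<alpha>\<^sup>2 * ((real n - real m + 1)\<^sup>2 + (real m - 1)) + (1 - \<alpha>)\<^sup>2 * (if m = 2 then 2 else 0)"
  "0 < \<alpha> \<Longrightarrow> E_alpha \<alpha> n Arcs = \<alpha>\<^sup>2 * ((real n - real m + 1)\<^sup>2 + (real m - 1)) + (1 - \<alpha>)\<^sup>2 * (if m = 2 then 2 else 0)
     \<longleftrightarrow> single_out_star n m c T TA"
proof -
  define Q where "Q = (\<Sum>v<n. outdeg Arcs v ^ 2)"
  define U where "U = (n - m + 1) ^ 2 + m - 1"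
  note E = E_alpha_eq[of \<alpha>, folded Q_def]
  have U: "(real n - real m + 1)\<^sup>2 + (real m - 1) = real U"
    using m_le_n two_le_m by (simp add: U_def of_nat_diff)
  show "E_alpha \<alpha> n Arcs \<le> \<alpha>\<^sup>2 * ((real n - real m + 1)\<^sup>2 + (real m - 1)) + (1 - \<alpha>)\<^sup>2 * (if m = 2 then 2 else 0)"
    using mult_left_mono[of "real Q" "real U" "\<alpha>\<^sup>2"] sum_outdeg_power2_upper(1)[folded Q_def U_def]
    by (simp add: E U)
  show "0 < \<alpha> \<Longrightarrow> E_alpha \<alpha> n Arcs = \<alpha>\<^sup>2 * ((real n - real m + 1)\<^sup>2 + (real m - 1)) + (1 - \<alpha>)\<^sup>2 * (if m = 2 then 2 else 0)
       \<longleftrightarrow> single_out_star n m c T TA"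
    using sum_outdeg_power2_upper(2)[folded Q_def U_def] by (simp add: E U)
qed

end

theorem corollary3p10:
  fixes \<alpha> :: real and n m :: nat and Arcs :: "(nat \<times> nat) set"
    and c :: "nat \<Rightarrow> nat" and T :: "nat \<Rightarrow> nat set" and TA :: "nat \<Rightarrow> (nat \<times> nat) set"
  assumes "0 \<le> \<alpha>" and "\<alpha> < 1"
    and G: "unicyclic_class n m Arcs c T TA"
  shows "(m = 2 \<longrightarrow>
            2 * \<alpha>\<^sup>2 + \<alpha>\<^sup>2 * (real n - 2) + 2 * (1 - \<alpha>)\<^sup>2 \<le> E_alpha \<alpha> n Arcs
          \<and> E_alpha \<alpha> n Arcs \<le> \<alpha>\<^sup>2 * (real n - 1)\<^sup>2 + \<alpha>\<^sup>2 + 2 * (1 - \<alpha>)\<^sup>2)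
       \<and> (3 \<le> m \<longrightarrow>
            \<alpha>\<^sup>2 * real m + \<alpha>\<^sup>2 * (real n - real m) \<le> E_alpha \<alpha> n Arcs
          \<and> E_alpha \<alpha> n Arcs \<le> \<alpha>\<^sup>2 * (real n - real m + 1)\<^sup>2 + \<alpha>\<^sup>2 * (real m - 1))
       \<and> (0 < \<alpha> \<longrightarrow>
            ((if m = 2 then E_alpha \<alpha> n Arcs = 2 * \<alpha>\<^sup>2 + \<alpha>\<^sup>2 * (real n - 2) + 2 * (1 - \<alpha>)\<^sup>2
              else E_alpha \<alpha> n Arcs = \<alpha>\<^sup>2 * real m + \<alpha>\<^sup>2 * (real n - real m))
             \<longleftrightarrow> (\<forall>i<m. in_tree_rooted (T i) (TA i) (c i)))
          \<and> ((if m = 2 then E_alpha \<alpha> n Arcs = \<alpha>\<^sup>2 * (real n - 1)\<^sup>2 + \<alpha>\<^sup>2 + 2 * (1 - \<alpha>)\<^sup>2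
              else E_alpha \<alpha> n Arcs = \<alpha>\<^sup>2 * (real n - real m + 1)\<^sup>2 + \<alpha>\<^sup>2 * (real m - 1))
             \<longleftrightarrow> single_out_star n m c T TA))"
proof -
  interpret unicyclic n m Arcs c T TA
    using G by unfold_locales
  let ?X = "(1 - \<alpha>)\<^sup>2 * (if m = 2 then 2 else 0)"
  show ?thesis
  proof (cases "m = 2")
    case True
    have lower: "2 * \<alpha>\<^sup>2 + \<alpha>\<^sup>2 * (real n - 2) + 2 * (1 - \<alpha>)\<^sup>2 = \<alpha>\<^sup>2 * real n + ?X"
      and upper: "\<alpha>\<^sup>2 * (real n - 1)\<^sup>2 + \<alpha>\<^sup>2 + 2 * (1 - \<alpha>)\<^sup>2
         = \<alpha>\<^sup>2 * ((real n - real m + 1)\<^sup>2 + (real m - 1)) + ?X"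
      using True by (simp_all add: algebra_simps)
    show ?thesis
      unfolding lower upper using True E_alpha_lower[of \<alpha>] E_alpha_upper[of \<alpha>] by simp
  next
    case False
    have lower: "\<alpha>\<^sup>2 * real m + \<alpha>\<^sup>2 * (real n - real m) = \<alpha>\<^sup>2 * real n + ?X"
      and upper: "\<alpha>\<^sup>2 * (real n - real m + 1)\<^sup>2 + \<alpha>\<^sup>2 * (real m - 1)
         = \<alpha>\<^sup>2 * ((real n - real m + 1)\<^sup>2 + (real m - 1)) + ?X"
      using False by (simp_all add: algebra_simps)
    show ?thesis
      unfolding lower upper using False two_le_m E_alpha_lower[of \<alpha>] E_alpha_upper[of \<alpha>] by simp
  qed
qed

end
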